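(* Let $(\mathcal W,\rhd)$ be a $\lambda$A-frame and $\eta$ a hereditary type environment. If $A\simeq B$, then $\mathcal I[A]^\eta_p=\mathcal I[B]^\eta_p$ for every $p\in\mathcal W$.
   Context: Type expressions: fix a countably infinite set of type variables $X,Y,Z,\dots$. Pseudo type expressions are generated by $A::=X\mid A\to A\mid \bullet A\mid \mu X.A$ ($\mu$ binds $X$; $\alpha$-convertible expressions are identified; $\to$ associates to the right; $\bullet$ binds tighter than $\to$, which binds tighter than $\mu$). $A[B/X]$ denotes capture-avoiding substitution. $\top$ abbreviates $\mu X.\bullet X$, and $\bullet^n A$ denotes $A$ prefixed by $n$ copies of $\bullet$. The tail $t(A)$ is defined by $t(X)=X$, $t(A\to B)=t(B)$, $t(\bullet A)=\bullet t(A)$, $t(\mu X.A)=\mu X.t(A)$; it always has the form $\bullet^{m_0}\mu X_1.\bullet^{m_1}\mu X_2.\cdots\mu X_n.\bullet^{m_n}Y$. $A$ is a $\top$-variant iff $Y=X_i$ for some $1\le i\le n$ with $X_i\notin\{X_{i+1},\dots,X_n\}$ and $m_i+\dots+m_n\ge 1$. $A$ is proper in $X$ iff: a variable $Y$ is proper in $X$ iff $Y\neq X$; $\bullet A$ is always proper in $X$; $A\to B$ is proper in $X$ iff both $A,B$ are proper in $X$ or $B$ is a $\top$-variant; for $Y\ne X$, $\mu Y.A$ is proper in $X$ iff $A$ is proper in $X$ or $\mu Y.A$ is a $\top$-variant. Type expressions are the least set of pseudo type expressions containing all type variables, closed under $\to$ and $\bullet$, and containing $\mu X.A$ whenever it contains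 $A$ and $A$ is proper in $X$. Equality: $\cong$ is the least relation on type expressions such that: $A\cong A$; $A\cong B$ implies $B\cong A$; $A\cong B$ and $B\cong C$ imply $A\cong C$; $A\cong B$ implies $\bullet A\cong\bullet B$; $A\cong C$ and $B\cong D$ imply $A\to B\cong C\to D$; $A\to\top\cong\top$; $\mu X.A\cong A[\mu X.A/X]$; and if $A\cong C[A/X]$ with $C$ proper in $X$, then $A\cong\mu X.C$. $\simeq$ is the least relation satisfying the same closure conditions and additionally $\bullet(A\to B)\simeq\bullet A\to\bullet B$. Semantics: a syntactical $\lambda$-algebra $(\mathcal V,\cdot,[\![-]\!])$ consists of a nonempty set $\mathcal V$, a map $\cdot:\mathcal V\times\mathcal V\to\mathcal V$, and values $[\![M]\!]_\rho\in\mathcal V$ for untyped $\lambda$-terms $M$ and maps $\rho$ from individual variables to $\mathcal V$, such that $[\![x]\!]_\rho=\rho(x)$, $[\![MN]\!]_\rho=[\![M]\!]_\rho\cdot[\![N]\!]_\rho$, $[\![\lambda x.M]\!]_\rho\cdot v=[\![M]\!]_{\rho[v/x]}$, $[\![M]\!]_\rho$ depends only on $\rho$ restricted to free variables of $M$, and $M=_\beta N$ implies $[\![M]\!]_\rho=[\![N]\!]_\rho$; fix one. A well-founded frame is a pair $(\mathcal W,\rhd)$ with $\mathcal W$ nonempty and $\rhd$ a binary relation on $\mathcal W$ admitting no infinite chain $p_0\rhd p_1\rhd p_2\rhd\cdots$; $\trianglerighteq$ denotes the reflexive-transitive closure of $\rhd$. $\rhd$ is locally linear if whenever $p\rhd q$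 there is $r$ with $p\trianglerighteq r\rhd q$ such that $r\rhd s$ implies $q\trianglerighteq s$ for all $s$. A $\lambda$A-frame is a well-founded frame whose $\rhd$ is locally linear. A type environment $\eta$ assigns a set $\eta(X)_p\subseteq\mathcal V$ to each type variable $X$ and world $p$; it is hereditary if $p\rhd q$ implies $\eta(X)_p\subseteq\eta(X)_q$. For hereditary $\eta$, $\mathcal I[A]^\eta_p\subseteq\mathcal V$ is defined (by well-founded induction on $p$ and the syntactic rank of $A$) by: $\mathcal I[A]^\eta_p=\mathcal V$ if $A$ is a $\top$-variant; otherwise $\mathcal I[X]^\eta_p=\eta(X)_p$; $\mathcal I[\bullet A]^\eta_p=\{u\mid u\in\mathcal I[A]^\eta_q\text{ for all }q\text{ with }p\rhd q\}$; $\mathcal I[A\to B]^\eta_p=\{u\mid \text{for all }q\text{ with }p\trianglerighteq q\text{ and all }v\in\mathcal I[A]^\eta_q,\ u\cdot v\in\mathcal I[B]^\eta_q\}$; $\mathcal I[\mu X.A]^\eta_p=\mathcal I[A[\mu X.A/X]]^\eta_p$. *)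

theory Defs
  imports Main
begin

text \<open>Pseudo type expressions, with bound type variables represented by de Bruijn
  indices, so that alpha-convertible expressions are literally identified.
  Free type variables are the indices that escape all enclosing binders;
  the free variable with index n (outside all binders) is the n-th type variable.\<close>

datatype ty = TV nat | Arrow ty ty | Nxt ty | Mu ty

fun lift_ty :: "nat \<Rightarrow> ty \<Rightarrow> ty" where
  "lift_ty k (TV i) = (if i < k then TV i else TV (Suc i))"
| "lift_ty k (Arrow A B) = Arrow (lift_ty k A) (lift_ty k B)"
| "lift_ty k (Nxt A) = Nxt (lift_ty k A)"
| "lift_ty k (Mu A) = Mu (lift_ty (Suc k) A)"

fun subst_ty :: "nat \<Rightarrow> ty \<Rightarrow> ty \<Rightarrow> ty" where
  "subst_ty k S (TV i) = (if i < k then TV i else if i = k then S else TV (i - 1))"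
| "subst_ty k S (Arrow A B) = Arrow (subst_ty k S A) (subst_ty k S B)"
| "subst_ty k S (Nxt A) = Nxt (subst_ty k S A)"
| "subst_ty k S (Mu A) = Mu (subst_ty (Suc k) (lift_ty 0 S) A)"

definition unfold_mu :: "ty \<Rightarrow> ty" where
  "unfold_mu A = subst_ty 0 (Mu A) A"

definition TopT :: ty where
  "TopT = Mu (Nxt (TV 0))"

fun tail :: "ty \<Rightarrow> ty" where
  "tail (TV i) = TV i"
| "tail (Arrow A B) = tail B"
| "tail (Nxt A) = Nxt (tail A)"
| "tail (Mu A) = Mu (tail A)"

text \<open>Auxiliary check on tails: gs lists, for each enclosing mu binder (innermost first),
  whether at least one bullet occurs between that binder and the current position.
  The final variable must be bound by some enclosing binder (de Bruijn index < length gs;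
  this automatically encodes that the binder is not shadowed by later ones) and there
  must be a bullet after that binder.\<close>
fun tv_aux :: "bool list \<Rightarrow> ty \<Rightarrow> bool" where
  "tv_aux gs (TV j) = (j < length gs \<and> gs ! j)"
| "tv_aux gs (Arrow A B) = tv_aux gs B"
| "tv_aux gs (Nxt A) = tv_aux (map (\<lambda>_. True) gs) A"
| "tv_aux gs (Mu A) = tv_aux (False # gs) A"

definition top_variant :: "ty \<Rightarrow> bool" where
  "top_variant A = tv_aux [] (tail A)"

fun proper :: "nat \<Rightarrow> ty \<Rightarrow> bool" where
  "proper k (TV i) = (i \<noteq> k)"
| "proper k (Nxt A) = True"
| "proper k (Arrow A B) = ((proper k A \<and> proper k B) \<or> top_variant B)"
| "proper k (Mu A) = (proper (Suc k) A \<or> top_variant (Mu A))"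

inductive type_expr :: "ty \<Rightarrow> bool" where
  te_var: "type_expr (TV i)"
| te_arrow: "type_expr A \<Longrightarrow> type_expr B \<Longrightarrow> type_expr (Arrow A B)"
| te_nxt: "type_expr A \<Longrightarrow> type_expr (Nxt A)"
| te_mu: "type_expr A \<Longrightarrow> proper 0 A \<Longrightarrow> type_expr (Mu A)"

text \<open>The equality relation \<simeq> on type expressions. In the fixpoint rule,
  C is the body of mu X.C (X is de Bruijn index 0), so C[A/X] is subst_ty 0 A C.\<close>
inductive ty_eq :: "ty \<Rightarrow> ty \<Rightarrow> bool" (infix "\<simeq>\<^sub>T" 50) where
  eq_refl: "type_expr A \<Longrightarrow> A \<simeq>\<^sub>T A"
| eq_sym: "A \<simeq>\<^sub>T B \<Longrightarrow> B \<simeq>\<^sub>T A"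
| eq_trans: "A \<simeq>\<^sub>T B \<Longrightarrow> B \<simeq>\<^sub>T C \<Longrightarrow> A \<simeq>\<^sub>T C"
| eq_nxt: "A \<simeq>\<^sub>T B \<Longrightarrow> Nxt A \<simeq>\<^sub>T Nxt B"
| eq_arrow: "A \<simeq>\<^sub>T C \<Longrightarrow> B \<simeq>\<^sub>T D \<Longrightarrow> Arrow A B \<simeq>\<^sub>T Arrow C D"
| eq_top: "type_expr A \<Longrightarrow> Arrow A TopT \<simeq>\<^sub>T TopT"
| eq_unfold: "type_expr (Mu A) \<Longrightarrow> Mu A \<simeq>\<^sub>T unfold_mu A"
| eq_fix: "A \<simeq>\<^sub>T subst_ty 0 A C \<Longrightarrow> type_expr C \<Longrightarrow> proper 0 C \<Longrightarrow> A \<simeq>\<^sub>T Mu C"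
| eq_distr: "type_expr A \<Longrightarrow> type_expr B \<Longrightarrow>
             Nxt (Arrow A B) \<simeq>\<^sub>T Arrow (Nxt A) (Nxt B)"

datatype lam = LVar nat | LApp lam lam | LAbs lam

fun lift_lam :: "nat \<Rightarrow> lam \<Rightarrow> lam" where
  "lift_lam k (LVar i) = (if i < k then LVar i else LVar (Suc i))"
| "lift_lam k (LApp s t) = LApp (lift_lam k s) (lift_lam k t)"
| "lift_lam k (LAbs s) = LAbs (lift_lam (Suc k) s)"

fun subst_lam :: "nat \<Rightarrow> lam \<Rightarrow> lam \<Rightarrow> lam" where
  "subst_lam k u (LVar i) = (if i < k then LVar i else if i = k then u else LVar (i - 1))"
| "subst_lam k u (LApp s t) = LApp (subst_lam k u s) (subst_lam k u t)"
| "subst_lam k u (LAbs s) = LAbs (subst_lam (Suc k) (lift_lam 0 u) s)"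

inductive beta :: "lam \<Rightarrow> lam \<Rightarrow> bool" where
  beta_rule: "beta (LApp (LAbs s) t) (subst_lam 0 t s)"
| beta_appL: "beta s s' \<Longrightarrow> beta (LApp s t) (LApp s' t)"
| beta_appR: "beta t t' \<Longrightarrow> beta (LApp s t) (LApp s t')"
| beta_abs: "beta s s' \<Longrightarrow> beta (LAbs s) (LAbs s')"

definition beta_eq :: "lam \<Rightarrow> lam \<Rightarrow> bool" where
  "beta_eq = equivclp beta"

fun lfv :: "lam \<Rightarrow> nat set" where
  "lfv (LVar i) = {i}"
| "lfv (LApp s t) = lfv s \<union> lfv t"
| "lfv (LAbs s) = {i. Suc i \<in> lfv s}"

definition scons :: "'v \<Rightarrow> (nat \<Rightarrow> 'v) \<Rightarrow> nat \<Rightarrow> 'v" where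
  "scons v \<rho> i = (case i of 0 \<Rightarrow> v | Suc j \<Rightarrow> \<rho> j)"

text \<open>The carrier V is the (nonempty) type 'v.\<close>
definition syn_lambda_algebra :: "('v \<Rightarrow> 'v \<Rightarrow> 'v) \<Rightarrow> (lam \<Rightarrow> (nat \<Rightarrow> 'v) \<Rightarrow> 'v) \<Rightarrow> bool" where
  "syn_lambda_algebra app sem \<longleftrightarrow>
     (\<forall>x \<rho>. sem (LVar x) \<rho> = \<rho> x) \<and>
     (\<forall>M N \<rho>. sem (LApp M N) \<rho> = app (sem M \<rho>) (sem N \<rho>)) \<and>
     (\<forall>M \<rho> v. app (sem (LAbs M) \<rho>) v = sem M (scons v \<rho>)) \<and>
     (\<forall>M \<rho> \<rho>'. (\<forall>x\<in>lfv M. \<rho> x = \<rho>' x) \<longrightarrow> sem M \<rho> = sem M \<rho>') \<and>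
     (\<forall>M N \<rho>. beta_eq M N \<longrightarrow> sem M \<rho> = sem N \<rho>)"

definition well_founded_frame :: "('w \<Rightarrow> 'w \<Rightarrow> bool) \<Rightarrow> bool" where
  "well_founded_frame R \<longleftrightarrow> \<not> (\<exists>f :: nat \<Rightarrow> 'w. \<forall>n. R (f n) (f (Suc n)))"

definition locally_linear :: "('w \<Rightarrow> 'w \<Rightarrow> bool) \<Rightarrow> bool" where
  "locally_linear R \<longleftrightarrow>
     (\<forall>p q. R p q \<longrightarrow> (\<exists>r. R\<^sup>*\<^sup>* p r \<and> R r q \<and> (\<forall>s. R r s \<longrightarrow> R\<^sup>*\<^sup>* q s)))"

definition lambdaA_frame :: "('w \<Rightarrow> 'w \<Rightarrow> bool) \<Rightarrow> bool" where
  "lambdaA_frame R \<longleftrightarrow> well_founded_frame R \<and> locally_linear R"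

text \<open>Type environments: eta X p for the free type variable X (de Bruijn index) and world p.\<close>
definition hereditary :: "('w \<Rightarrow> 'w \<Rightarrow> bool) \<Rightarrow> (nat \<Rightarrow> 'w \<Rightarrow> 'v set) \<Rightarrow> bool" where
  "hereditary R \<eta> \<longleftrightarrow> (\<forall>X p q. R p q \<longrightarrow> \<eta> X p \<subseteq> \<eta> X q)"

text \<open>The defining clauses of the interpretation I[A]^eta_p, for all type expressions A
  and all worlds p. The paper defines I by well-founded recursion; we characterise it
  as (any) function satisfying the defining equations on type expressions.\<close>
definition interp_eqs ::
  "('w \<Rightarrow> 'w \<Rightarrow> bool) \<Rightarrow> ('v \<Rightarrow> 'v \<Rightarrow> 'v) \<Rightarrow> (nat \<Rightarrow> 'w \<Rightarrow> 'v set) \<Rightarrow> (ty \<Rightarrow> 'w \<Rightarrow> 'v set) \<Rightarrow> bool"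
where
  "interp_eqs R app \<eta> I \<longleftrightarrow>
     (\<forall>A p. type_expr A \<longrightarrow>
        I A p =
          (if top_variant A then UNIV
           else (case A of
                   TV X \<Rightarrow> \<eta> X p
                 | Nxt B \<Rightarrow> {u. \<forall>q. R p q \<longrightarrow> u \<in> I B q}
                 | Arrow B C \<Rightarrow> {u. \<forall>q. R\<^sup>*\<^sup>* p q \<longrightarrow> (\<forall>v\<in>I B q. app u v \<in> I C q)}
                 | Mu B \<Rightarrow> I (unfold_mu B) p)))"

end

theory Submission
  imports Defs
begin

text \<open>The fixpoint rule is the only delicate one: since
  \<open>C\<close> is proper in \<open>X\<close>, the value of \<open>C[D/X]\<close> at a world \<open>p\<close> depends on
  \<open>D\<close> at \<open>p\<close> itself only through occurrences not guarded by a \<open>\<bullet>\<close>, and properness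
  rules these out outside top variants (whose value is everything); all other occurrences
  are looked up at strictly later worlds. Well-founded induction on worlds,
  nested with induction on the rank of \<open>C\<close>, therefore makes \<open>\<mu>X.C\<close> the unique
  solution of \<open>A = C[A/X]\<close>. The distributivity rule \<open>\<bullet>(A \<rightarrow> B) = \<bullet>A \<rightarrow> \<bullet>B\<close> uses
  local linearity of the frame together with heredity of the interpretation.\<close>

lemma lift_ty_lift_ty:
  "i \<le> k \<Longrightarrow> lift_ty (Suc k) (lift_ty i t) = lift_ty i (lift_ty k t)"
  by (induct t arbitrary: i k) auto

lemma lift_ty_subst_ty_below:
  "i \<le> j \<Longrightarrow> lift_ty i (subst_ty j s t) = subst_ty (Suc j) (lift_ty i s) (lift_ty i t)"
  by (induct t arbitrary: i j s) (auto simp: lift_ty_lift_ty)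

lemma subst_ty_lift_ty [simp]: "subst_ty k s (lift_ty k t) = t"
  by (induct t arbitrary: k s) simp_all

lemma subst_ty_subst_ty:
  "i \<le> j \<Longrightarrow>
   subst_ty i (subst_ty j v u) (subst_ty (Suc j) (lift_ty i v) t) = subst_ty j v (subst_ty i u t)"
  by (induct t arbitrary: i j u v)
    (simp_all add: diff_Suc lift_ty_lift_ty [symmetric] lift_ty_subst_ty_below split: nat.split)

lemma unfold_mu_subst_ty:
  "unfold_mu (subst_ty (Suc k) (lift_ty 0 D) C) = subst_ty k D (unfold_mu C)"
  unfolding unfold_mu_def using subst_ty_subst_ty[of 0 k D "Mu C" C] by simp

lemma tv_aux_tail: "tv_aux gs (tail A) = tv_aux gs A"
  by (induct A arbitrary: gs) auto

lemma top_variant_iff_tv_aux: "top_variant A = tv_aux [] A"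
  by (simp add: top_variant_def tv_aux_tail)

lemma top_variant_simps [simp]:
  "\<not> top_variant (TV i)"
  "top_variant (Arrow A B) = top_variant B"
  "top_variant (Nxt A) = top_variant A"
  by (simp_all add: top_variant_iff_tv_aux)

lemma tv_aux_lift_ty:
  "k \<le> length gs \<Longrightarrow> tv_aux (take k gs @ g # drop k gs) (lift_ty k A) = tv_aux gs A"
proof (induct A arbitrary: gs k g)
  case (TV j)
  then show ?case
    by (auto simp: nth_append min_def nth_Cons' split: if_splits)
next
  case (Nxt A)
  then show ?case using Nxt(1)[of k "map (\<lambda>_. True) gs" True]
    by (simp add: take_map drop_map)
next
  case (Mu A)
  then show ?case using Mu(1)[of "Suc k" "False # gs" g] by simp
qed simp

lemma tv_aux_lift_ty_beyond:
  "length gs \<le> k \<Longrightarrow> tv_aux gs (lift_ty k A) = tv_aux gs A"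
  by (induct A arbitrary: gs k) auto

lemma tv_aux_subst_ty_beyond:
  "length gs \<le> k \<Longrightarrow> tv_aux gs A \<Longrightarrow> tv_aux gs (subst_ty k S A)"
  by (induct A arbitrary: gs k S) auto

lemma top_variant_lift_ty [simp]: "top_variant (lift_ty k A) = top_variant A"
  by (simp add: top_variant_iff_tv_aux tv_aux_lift_ty_beyond)

lemma top_variant_subst_ty: "top_variant A \<Longrightarrow> top_variant (subst_ty k S A)"
  by (simp add: top_variant_iff_tv_aux tv_aux_subst_ty_beyond)

lemma top_variant_Mu_lift_ty: "top_variant (Mu (lift_ty (Suc k) A)) = top_variant (Mu A)"
  using top_variant_lift_ty[of k "Mu A"] by simp

lemma top_variant_Mu_subst_ty:
  "top_variant (Mu A) \<Longrightarrow> top_variant (Mu (subst_ty (Suc k) (lift_ty 0 S) A))"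
  using top_variant_subst_ty[of "Mu A" k S] by simp

lemma tv_aux_subst_ty_last:
  "length gs = k \<Longrightarrow> tv_aux (gs @ [g]) B \<Longrightarrow> (\<forall>gs'. length gs' = k \<longrightarrow> tv_aux gs' S)
   \<Longrightarrow> tv_aux gs (subst_ty k S B)"
proof (induct B arbitrary: gs k S g)
  case (TV j)
  then show ?case by (auto simp: nth_append split: if_splits)
next
  case (Arrow B1 B2)
  then show ?case by simp
next
  case (Nxt B)
  then show ?case using Nxt(1)[of "map (\<lambda>_. True) gs" k True S] by simp
next
  case (Mu B)
  have "tv_aux gs' (lift_ty 0 S)" if "length gs' = Suc k" for gs'
  proof -
    from that obtain h t where "gs' = h # t" "length t = k" by (cases gs') auto
    then show ?thesis using Mu(4) tv_aux_lift_ty[of 0 t h S] by simp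
  qed
  then show ?case using Mu(1)[of "False # gs" "Suc k" g "lift_ty 0 S"] Mu(2,3) by simp
qed

lemma top_variant_unfold_mu: "top_variant (Mu B) \<Longrightarrow> top_variant (unfold_mu B)"
  unfolding unfold_mu_def top_variant_iff_tv_aux
  using tv_aux_subst_ty_last[of "[]" 0 False B "Mu B"] by simp

lemma top_variant_TopT: "top_variant TopT"
  by (simp add: TopT_def top_variant_iff_tv_aux)

lemma proper_lift_ty_below: "j < k \<Longrightarrow> proper j A \<Longrightarrow> proper j (lift_ty k A)"
  by (induct A arbitrary: j k) (auto simp: top_variant_Mu_lift_ty)

lemma proper_lift_ty_above: "k \<le> j \<Longrightarrow> proper j A \<Longrightarrow> proper (Suc j) (lift_ty k A)"
  by (induct A arbitrary: j k) (auto simp: top_variant_Mu_lift_ty)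

lemma proper_lift_ty_self: "proper k (lift_ty k A)"
  by (induct A arbitrary: k) auto

lemma proper_subst_ty_below:
  "j < k \<Longrightarrow> proper j C \<Longrightarrow> proper j S \<Longrightarrow> proper j (subst_ty k S C)"
  by (induct C arbitrary: j k S)
    (auto simp: top_variant_subst_ty top_variant_Mu_subst_ty proper_lift_ty_above)

lemma proper_subst_ty_above:
  "j \<le> k \<Longrightarrow> proper (Suc k) C \<Longrightarrow> proper k S \<Longrightarrow> proper k (subst_ty j S C)"
  by (induct C arbitrary: j k S)
    (auto simp: top_variant_subst_ty top_variant_Mu_subst_ty proper_lift_ty_above)

lemma top_variant_imp_proper: "top_variant A \<Longrightarrow> proper k A"
  by (cases A) auto

lemma proper_unfold_mu: "proper k (Mu B) \<Longrightarrow> proper k (unfold_mu B)"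
  unfolding unfold_mu_def
  by (cases "top_variant (Mu B)")
    (auto simp: proper_subst_ty_above top_variant_imp_proper top_variant_unfold_mu[unfolded unfold_mu_def])

inductive_cases type_expr_ArrowE: "type_expr (Arrow A B)"
inductive_cases type_expr_NxtE: "type_expr (Nxt A)"
inductive_cases type_expr_MuE: "type_expr (Mu A)"

lemma type_expr_lift_ty: "type_expr A \<Longrightarrow> type_expr (lift_ty k A)"
  by (induct arbitrary: k rule: type_expr.induct)
    (auto intro: type_expr.intros proper_lift_ty_below)

lemma type_expr_subst_ty: "type_expr A \<Longrightarrow> type_expr S \<Longrightarrow> type_expr (subst_ty k S A)"
  by (induct arbitrary: k S rule: type_expr.induct)
    (auto intro!: type_expr.intros type_expr_lift_ty proper_subst_ty_below proper_lift_ty_self)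

lemma type_expr_unfold_mu: "type_expr (Mu B) \<Longrightarrow> type_expr (unfold_mu B)"
  unfolding unfold_mu_def by (blast elim: type_expr_MuE intro: type_expr_subst_ty)

lemma type_expr_TopT: "type_expr TopT"
  unfolding TopT_def by (auto intro!: type_expr.intros)

lemma ty_eq_type_expr: "A \<simeq>\<^sub>T B \<Longrightarrow> type_expr A \<and> type_expr B"
  by (induct rule: ty_eq.induct)
    (auto intro: type_expr.intros type_expr_unfold_mu type_expr_TopT)

fun rank :: "ty \<Rightarrow> nat" where
  "rank (TV i) = 0"
| "rank (Nxt A) = 0"
| "rank (Arrow A B) = (if top_variant B then 0 else Suc (max (rank A) (rank B)))"
| "rank (Mu A) = (if top_variant (Mu A) then 0 else Suc (rank A))"

lemma rank_subst_ty_le: "proper k A \<Longrightarrow> rank (subst_ty k S A) \<le> rank A"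
proof (induct A arbitrary: k S)
  case (Arrow A1 A2)
  then show ?case
    by (cases "top_variant A2") (auto simp: top_variant_subst_ty intro: max.coboundedI1 max.coboundedI2)
next
  case (Mu A)
  then show ?case
    by (cases "top_variant (Mu A)") (auto simp: top_variant_Mu_subst_ty)
qed auto

lemma rank_unfold_mu_less:
  "type_expr (Mu B) \<Longrightarrow> \<not> top_variant (Mu B) \<Longrightarrow> rank (unfold_mu B) < rank (Mu B)"
  unfolding unfold_mu_def by (auto elim!: type_expr_MuE intro: le_imp_less_Suc rank_subst_ty_le)

lemma well_founded_frame_induct [consumes 1, case_names step]:
  assumes "well_founded_frame R"
    and "\<And>p. (\<And>q. R\<^sup>+\<^sup>+ p q \<Longrightarrow> P q) \<Longrightarrow> P p"
  shows "P p"
proof -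
  have "wfp R\<inverse>\<inverse>"
    using assms(1) unfolding well_founded_frame_def wfp_def wf_iff_no_infinite_down_chain by auto
  then have "wfp R\<^sup>+\<^sup>+\<inverse>\<inverse>"
    by (metis wfp_tranclp tranclp_converse)
  then show ?thesis by (induction rule: wfp_induct_rule) (auto intro: assms(2))
qed

lemma well_founded_frame_measure_induct [consumes 1, case_names step]:
  fixes f :: "'a \<Rightarrow> nat"
  assumes "well_founded_frame R"
    and "\<And>p x. (\<And>q y. R\<^sup>+\<^sup>+ p q \<Longrightarrow> P q y) \<Longrightarrow> (\<And>y. f y < f x \<Longrightarrow> P p y) \<Longrightarrow> P p x"
  shows "P p x"
  using assms(1)
proof (induction p arbitrary: x rule: well_founded_frame_induct)
  case (step p)
  show ?case by (induction x rule: measure_induct_rule[of f]) (use assms(2) step in blast)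
qed

lemma locally_linear_tranclp_last:
  assumes "locally_linear R" and "R\<^sup>+\<^sup>+ p q"
  obtains r where "R\<^sup>*\<^sup>* p r" "R r q" "\<And>s. R r s \<Longrightarrow> R\<^sup>*\<^sup>* q s"
proof -
  from \<open>R\<^sup>+\<^sup>+ p q\<close> obtain x where "R\<^sup>*\<^sup>* p x" "R x q"
    by (metis tranclp.cases tranclp_into_rtranclp rtranclp.rtrancl_refl)
  with assms(1) show ?thesis
    unfolding locally_linear_def by (meson rtranclp_trans that)
qed

locale interp_model =
  fixes R :: "'w \<Rightarrow> 'w \<Rightarrow> bool"
    and app :: "'v \<Rightarrow> 'v \<Rightarrow> 'v"
    and \<eta> :: "nat \<Rightarrow> 'w \<Rightarrow> 'v set"
    and I :: "ty \<Rightarrow> 'w \<Rightarrow> 'v set"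
  assumes well_founded: "well_founded_frame R"
    and interp: "interp_eqs R app \<eta> I"
begin

lemma I_top_variant: "type_expr A \<Longrightarrow> top_variant A \<Longrightarrow> I A p = UNIV"
  using interp unfolding interp_eqs_def by simp

lemma I_TV: "I (TV X) p = \<eta> X p"
  using interp unfolding interp_eqs_def by (simp add: te_var)

lemma I_Nxt: "type_expr A \<Longrightarrow> I (Nxt A) p = {u. \<forall>q. R p q \<longrightarrow> u \<in> I A q}"
  using interp I_top_variant unfolding interp_eqs_def by (auto simp: te_nxt)

lemma I_Arrow:
  "type_expr A \<Longrightarrow> type_expr B \<Longrightarrow>
   I (Arrow A B) p = {u. \<forall>q. R\<^sup>*\<^sup>* p q \<longrightarrow> (\<forall>v\<in>I A q. app u v \<in> I B q)}"
  using interp I_top_variant unfolding interp_eqs_def by (auto simp: te_arrow)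

lemma I_Mu: "type_expr (Mu B) \<Longrightarrow> I (Mu B) p = I (unfold_mu B) p"
  using interp I_top_variant[of "unfold_mu B"] unfolding interp_eqs_def
  by (auto simp: top_variant_unfold_mu type_expr_unfold_mu)

lemma I_mono:
  assumes "hereditary R \<eta>"
  shows "type_expr A \<Longrightarrow> R p q \<Longrightarrow> I A p \<subseteq> I A q"
  using well_founded
proof (induction p A arbitrary: q rule: well_founded_frame_measure_induct[where f = rank])
  case (step p A)
  show ?case
  proof (cases "top_variant A")
    case True
    then show ?thesis using step.prems I_top_variant by simp
  next
    case False
    show ?thesis
    proof (cases A)
      case (TV X)
      then show ?thesis using assms step.prems by (simp add: I_TV hereditary_def)
    next
      case (Arrow B C)
      with step.prems show ?thesis
        by (auto simp: I_Arrow elim!: type_expr_ArrowE) (meson converse_rtranclp_into_rtranclp)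
    next
      case (Nxt B)
      with step.prems have "type_expr B" by (auto elim: type_expr_NxtE)
      moreover have "I B q \<subseteq> I B s" if "R q s" for s
        using step.IH(1)[of q B s] step.prems(2) \<open>type_expr B\<close> that by blast
      ultimately show ?thesis using step.prems(2) by (auto simp: Nxt I_Nxt)
    next
      case (Mu B)
      with step.prems False have "rank (unfold_mu B) < rank A"
        using rank_unfold_mu_less by blast
      with Mu step.prems step.IH(2)[of "unfold_mu B" q] show ?thesis
        by (simp add: I_Mu type_expr_unfold_mu)
    qed
  qed
qed

lemma I_mono_rtranclp:
  assumes "hereditary R \<eta>" and "type_expr A"
  shows "R\<^sup>*\<^sup>* p q \<Longrightarrow> I A p \<subseteq> I A q"
  by (induction rule: rtranclp_induct) (use I_mono assms in blast)+

lemma I_subst_ty_cong: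
  assumes "type_expr D" and "type_expr E"
  shows "type_expr C \<Longrightarrow> \<forall>q. R\<^sup>+\<^sup>+ p q \<longrightarrow> I D q = I E q \<Longrightarrow> proper k C \<or> I D p = I E p \<Longrightarrow>
    I (subst_ty k D C) p = I (subst_ty k E C) p"
  using well_founded
proof (induction p C rule: well_founded_frame_measure_induct[where f = rank])
  case (step p C)
  have later: "I (subst_ty k D B) q = I (subst_ty k E B) q" if "R\<^sup>+\<^sup>+ p q" and "type_expr B" for q B
    using step.IH(1)[OF that] step.prems(2) that(1) by (meson tranclp_trans)
  show ?case
  proof (cases "top_variant C")
    case True
    with step.prems(1) assms show ?thesis
      by (simp add: I_top_variant type_expr_subst_ty top_variant_subst_ty)
  next
    case False
    show ?thesis
    proof (cases C)
      case (TV i)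
      with step.prems(3) show ?thesis by (auto simp: I_TV)
    next
      case (Nxt B)
      with step.prems(1) have "type_expr B" by (auto elim: type_expr_NxtE)
      with later assms show ?thesis by (auto simp: Nxt I_Nxt type_expr_subst_ty)
    next
      case (Arrow B B')
      with step.prems(1) have types: "type_expr B" "type_expr B'" by (auto elim: type_expr_ArrowE)
      from Arrow False have "rank B < rank C" "rank B' < rank C" by auto
      moreover from Arrow False step.prems(3) have "(proper k B \<and> proper k B') \<or> I D p = I E p"
        by auto
      ultimately have "I (subst_ty k D B) p = I (subst_ty k E B) p"
        "I (subst_ty k D B') p = I (subst_ty k E B') p"
        using step.IH(2) types step.prems(2) by blast+
      with later types have "I (subst_ty k D B) q = I (subst_ty k E B) q"
        "I (subst_ty k D B') q = I (subst_ty k E B') q" if "R\<^sup>*\<^sup>* p q" for q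
        using that by (metis rtranclpD)+
      with types assms show ?thesis by (simp add: Arrow I_Arrow type_expr_subst_ty)
    next
      case (Mu B)
      with step.prems(1) False have "rank (unfold_mu B) < rank C"
        using rank_unfold_mu_less by blast
      moreover from step.prems(1) Mu have "type_expr (unfold_mu B)"
        using type_expr_unfold_mu by blast
      moreover from step.prems(3) Mu have "proper k (unfold_mu B) \<or> I D p = I E p"
        using proper_unfold_mu by blast
      ultimately have "I (subst_ty k D (unfold_mu B)) p = I (subst_ty k E (unfold_mu B)) p"
        using step.IH(2) step.prems(2) by blast
      moreover have "I (subst_ty k X C) p = I (subst_ty k X (unfold_mu B)) p" if "type_expr X" for X
      proof -
        from step.prems(1) that have "type_expr (subst_ty k X C)" by (rule type_expr_subst_ty)
        then show ?thesis by (simp add: Mu I_Mu unfold_mu_subst_ty)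
      qed
      ultimately show ?thesis using assms by simp
    qed
  qed
qed

lemma I_Mu_unique_fixpoint:
  assumes "type_expr A" and "type_expr C" and "proper 0 C"
    and "\<forall>p. I A p = I (subst_ty 0 A C) p"
  shows "I A p = I (Mu C) p"
  using well_founded
proof (induction p rule: well_founded_frame_induct)
  case (step p)
  have "type_expr (Mu C)" using assms(2,3) by (rule te_mu)
  then have "I (Mu C) p = I (subst_ty 0 (Mu C) C) p" by (simp add: I_Mu unfold_mu_def)
  also have "\<dots> = I (subst_ty 0 A C) p"
    using I_subst_ty_cong[of "Mu C" A C p 0] \<open>type_expr (Mu C)\<close> assms step.IH by auto
  also have "\<dots> = I A p" using assms(4) by simp
  finally show ?case by simp
qed

lemma I_Nxt_Arrow:
  assumes "locally_linear R" and "hereditary R \<eta>" and "type_expr A" and "type_expr B"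
  shows "I (Nxt (Arrow A B)) p = I (Arrow (Nxt A) (Nxt B)) p"
proof (intro set_eqI iffI)
  fix u
  assume "u \<in> I (Nxt (Arrow A B)) p"
  then have u: "app u v \<in> I B r" if "R p q" "R\<^sup>*\<^sup>* q r" "v \<in> I A r" for q r v
    using that assms(3,4) by (simp add: I_Nxt I_Arrow te_arrow)
  have "app u v \<in> I B s" if "R\<^sup>*\<^sup>* p q" "\<forall>s. R q s \<longrightarrow> v \<in> I A s" "R q s" for q v s
  proof -
    from that(1,3) have "R\<^sup>+\<^sup>+ p s" by (rule rtranclp_into_tranclp1)
    then obtain q' where "R p q'" "R\<^sup>*\<^sup>* q' s" by (blast dest: tranclpD)
    with u that(2,3) show ?thesis by blast
  qed
  with assms(3,4) show "u \<in> I (Arrow (Nxt A) (Nxt B)) p"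
    by (simp add: I_Nxt I_Arrow te_nxt)
next
  fix u
  assume "u \<in> I (Arrow (Nxt A) (Nxt B)) p"
  then have u: "app u v \<in> I B s"
    if "R\<^sup>*\<^sup>* p r" "\<forall>s. R r s \<longrightarrow> v \<in> I A s" "R r s" for r v s
    using that assms(3,4) by (simp add: I_Nxt I_Arrow te_nxt)
  have "app u v \<in> I B r" if "R p q" "R\<^sup>*\<^sup>* q r" "v \<in> I A r" for q r v
  proof -
    from that(1,2) have "R\<^sup>+\<^sup>+ p r" by (rule rtranclp_into_tranclp2)
    then obtain r' where "R\<^sup>*\<^sup>* p r'" "R r' r" and later: "\<And>s. R r' s \<Longrightarrow> R\<^sup>*\<^sup>* r s"
      using locally_linear_tranclp_last[OF assms(1)] by blast
    moreover have "v \<in> I A s" if "R r' s" for s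
      using I_mono_rtranclp[OF assms(2,3) later[OF that]] \<open>v \<in> I A r\<close> by blast
    ultimately show ?thesis using u by blast
  qed
  with assms(3,4) show "u \<in> I (Nxt (Arrow A B)) p"
    by (simp add: I_Nxt I_Arrow te_arrow)
qed

end

theorem theorem4:
  fixes R :: "'w \<Rightarrow> 'w \<Rightarrow> bool"
    and app :: "'v \<Rightarrow> 'v \<Rightarrow> 'v"
    and sem :: "lam \<Rightarrow> (nat \<Rightarrow> 'v) \<Rightarrow> 'v"
    and \<eta> :: "nat \<Rightarrow> 'w \<Rightarrow> 'v set"
    and I :: "ty \<Rightarrow> 'w \<Rightarrow> 'v set"
  assumes "syn_lambda_algebra app sem"
    and "lambdaA_frame R"
    and "hereditary R \<eta>"
    and "interp_eqs R app \<eta> I"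
    and "A \<simeq>\<^sub>T B"
  shows "\<forall>p. I A p = I B p"
proof -
  from assms(2) have frame: "well_founded_frame R" "locally_linear R"
    by (simp_all add: lambdaA_frame_def)
  interpret interp_model R app \<eta> I
    using frame(1) assms(4) by unfold_locales
  from assms(5) show ?thesis
  proof (induction rule: ty_eq.induct)
    case (eq_nxt A B)
    then show ?case using ty_eq_type_expr[OF eq_nxt.hyps] by (simp add: I_Nxt)
  next
    case (eq_arrow A C B D)
    then show ?case using ty_eq_type_expr[OF eq_arrow.hyps(1)] ty_eq_type_expr[OF eq_arrow.hyps(2)]
      by (simp add: I_Arrow)
  next
    case (eq_top A)
    then show ?case by (simp add: I_top_variant te_arrow type_expr_TopT top_variant_TopT)
  next
    case (eq_unfold A)
    then show ?case by (simp add: I_Mu)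
  next
    case (eq_fix A C)
    then show ?case using I_Mu_unique_fixpoint ty_eq_type_expr[OF eq_fix.hyps(1)] by blast
  next
    case (eq_distr A B)
    then show ?case using I_Nxt_Arrow frame(2) assms(3) by blast
  qed auto
qed

end
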